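(* Let $D_0=\{(p,u)\in\mathbb{R}^2: p>0,\ u>-1\}$ and for $n\ge1$ let $D_n=\Phi^{-1}(D_{n-1})\cap D_0$, where $\Phi^{-1}(D)=\{(p,u): p\ne0,\ \Phi(p,u)\in D\}$. Then for every $n\ge0$ the set $D_n$ is convex.
   Context: $\Phi$ is the partial map of $\mathbb{R}^2$ defined for $p\ne0$ by $\Phi(p,u)=\bigl(p^2(u+1)-1,\ 1/p\bigr)$. *)

theory Defs
  imports "HOL-Analysis.Analysis"
begin

text \<open>The partial map Phi, defined for p \<noteq> 0.\<close>
definition Phi :: "real \<times> real \<Rightarrow> real \<times> real" where
  "Phi = (\<lambda>(p, u). (p^2 * (u + 1) - 1, 1 / p))"

definition Phi_preimage :: "(real \<times> real) set \<Rightarrow> (real \<times> real) set" where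
  "Phi_preimage D = {(p, u). p \<noteq> 0 \<and> Phi (p, u) \<in> D}"

definition D0 :: "(real \<times> real) set" where
  "D0 = {(p, u). p > 0 \<and> u > -1}"

fun Dn :: "nat \<Rightarrow> (real \<times> real) set" where
  "Dn 0 = D0"
| "Dn (Suc n) = Phi_preimage (Dn n) \<inter> D0"

end

theory Submission
  imports Defs
begin

(*
  In the coordinates s = 1/p, t = (u + 1)/p one has
  Dn (n + 1) = D0 \<inter> {(p, u). p > 0, (s, t) \<in> cube_chart (Dn n)},
  where cube_chart D = {(s, t). s > 0, (t/s^3 - 1, s) \<in> D}, and preimages of convex sets
  under this perspective map are convex. So it suffices that cube_chart preserves convexity.
  This holds for convex D that are upper sets for the order
  (q, v) \<le> (q', v') iff q \<le> q' and (1 + q) v \<le> (1 + q') v', a property that D0 has and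
  that passes from Dn n to Dn (n + 1).
  To combine the points (s1, A1 s1^3) and (s2, A2 s2^3) of cube_chart D, s1 \<le> s2, with
  weights l and 1 - l, move (A2 - 1, s2) up in D to abscissa \<sigma> \<le> s2 keeping A2 s2 fixed,
  take the convex combination with (A1 - 1, s1) of weight \<nu> = l s1^3 / s^3, and move up
  once more. The last move is possible by the inequality
  (s^3 - l s1^3)^2 \<le> (1 - l) s2^2 (s^4 - l s1^4) for s = l s1 + (1 - l) s2.
*)

lemma convex_real_pairI:
  fixes S :: "(real \<times> real) set"
  assumes "\<And>a b c d l. (a, b) \<in> S \<Longrightarrow> (c, d) \<in> S \<Longrightarrow> 0 < l \<Longrightarrow> l < 1 \<Longrightarrow>
             (l * a + (1 - l) * c, l * b + (1 - l) * d) \<in> S"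
  shows "convex S"
proof (rule convexI)
  fix x y :: "real \<times> real" and u v :: real
  assume S: "x \<in> S" "y \<in> S" and "0 \<le> u" "0 \<le> v" "u + v = 1"
  then consider "u = 0" "v = 1" | "u = 1" "v = 0" | "0 < u" "u < 1" "v = 1 - u"
    by fastforce
  then show "u *\<^sub>R x + v *\<^sub>R y \<in> S"
  proof cases
    case 3
    then show ?thesis
      using assms[of "fst x" "snd x" "fst y" "snd y" u] S by (cases x, cases y) simp
  qed (use S in auto)
qed

lemma convex_real_pairD:
  fixes S :: "(real \<times> real) set"
  assumes "convex S" "(a, b) \<in> S" "(c, d) \<in> S" "0 \<le> l" "l \<le> 1"
  shows "(l * a + (1 - l) * c, l * b + (1 - l) * d) \<in> S"
  using convexD[OF assms(1-3), of l "1 - l"] assms(4,5) by simp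

lemma convex_D0: "convex D0"
proof -
  have "D0 = {x. inner (1, 0) x > 0} \<inter> {x. inner (0, 1) x > -1}"
    by (auto simp: D0_def inner_Pair)
  then show ?thesis
    by (metis convex_Int convex_halfspace_gt)
qed

definition upward_closed :: "(real \<times> real) set \<Rightarrow> bool" where
  "upward_closed D \<longleftrightarrow>
     (\<forall>q v q' v'. (q, v) \<in> D \<longrightarrow> q \<le> q' \<longrightarrow> (1 + q) * v \<le> (1 + q') * v' \<longrightarrow> (q', v') \<in> D)"

lemma upward_closedI:
  "(\<And>q v q' v'. (q, v) \<in> D \<Longrightarrow> q \<le> q' \<Longrightarrow> (1 + q) * v \<le> (1 + q') * v' \<Longrightarrow> (q', v') \<in> D)
     \<Longrightarrow> upward_closed D"
  unfolding upward_closed_def by blast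

lemma upward_closedD:
  "upward_closed D \<Longrightarrow> (q, v) \<in> D \<Longrightarrow> q \<le> q' \<Longrightarrow> (1 + q) * v \<le> (1 + q') * v' \<Longrightarrow> (q', v') \<in> D"
  unfolding upward_closed_def by blast

lemma upward_closed_D0: "upward_closed D0"
proof (rule upward_closedI)
  fix q v q' v' :: real
  assume "(q, v) \<in> D0" and le: "q \<le> q'" "(1 + q) * v \<le> (1 + q') * v'"
  then have "0 < q" "-1 < v" by (auto simp: D0_def)
  have "0 < (1 + q) * (1 + v)"
    using \<open>0 < q\<close> \<open>-1 < v\<close> by simp
  also have "\<dots> \<le> (1 + q') * (1 + v')"
    using le by (simp add: algebra_simps)
  finally have "-1 < v'"
    using \<open>0 < q\<close> le(1) by (simp add: zero_less_mult_iff)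
  then show "(q', v') \<in> D0"
    using \<open>0 < q\<close> le(1) by (simp add: D0_def)
qed

lemma upward_closed_Phi_preimage_Int_D0:
  assumes "upward_closed D"
  shows "upward_closed (Phi_preimage D \<inter> D0)"
proof (rule upward_closedI)
  fix p u p' u' :: real
  assume pu: "(p, u) \<in> Phi_preimage D \<inter> D0" and le: "p \<le> p'" "(1 + p) * u \<le> (1 + p') * u'"
  then have "0 < p" "-1 < u" and Phi_pu: "(p^2 * (u + 1) - 1, 1 / p) \<in> D"
    by (auto simp: Phi_preimage_def Phi_def D0_def)
  have D0': "(p', u') \<in> D0"
    using upward_closedD[OF upward_closed_D0 _ le] pu by blast
  then have "0 < p'" by (simp add: D0_def)
  have mono: "p * (u + 1) \<le> p' * (u' + 1)"
  proof (cases "u \<le> u'")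
    case True
    then show ?thesis
      using le(1) \<open>0 < p\<close> \<open>-1 < u\<close> by (intro mult_mono) auto
  next
    case False
    then show ?thesis
      using le by (simp add: algebra_simps)
  qed
  have "p * (p * (u + 1)) \<le> p' * (p' * (u' + 1))"
    using \<open>0 < p\<close> \<open>-1 < u\<close> \<open>0 < p'\<close> by (intro mult_mono[OF le(1) mono]) auto
  then have "p^2 * (u + 1) - 1 \<le> p'^2 * (u' + 1) - 1"
    by (simp add: power2_eq_square algebra_simps)
  moreover have "(1 + (p^2 * (u + 1) - 1)) * (1 / p) \<le> (1 + (p'^2 * (u' + 1) - 1)) * (1 / p')"
    using mono \<open>0 < p\<close> \<open>0 < p'\<close> by (simp add: power2_eq_square)
  ultimately have "(p'^2 * (u' + 1) - 1, 1 / p') \<in> D"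
    using upward_closedD[OF assms Phi_pu] by blast
  then show "(p', u') \<in> Phi_preimage D \<inter> D0"
    using D0' \<open>0 < p'\<close> by (simp add: Phi_preimage_def Phi_def)
qed

lemma power_gap_inequality:
  fixes x y l s :: real
  assumes "0 < x" "x \<le> y" "0 \<le> l" "l \<le> 1" "s = l * x + (1 - l) * y"
  shows "(s^3 - l * x^3)^2 \<le> (1 - l) * y^2 * (s^4 - l * x^4)"
proof -
  define a b where "a = s - x" and "b = y - s"
  define Q where "Q = (y - x) * (s^2 + s * x + x^2) + x^3"
  define P where "P = (y - x) * (s^3 + s^2 * x + s * x^2 + x^3) + x^4"
  have "0 \<le> a" "0 \<le> b"
    using assms mult_left_mono[OF \<open>x \<le> y\<close>, of l] mult_left_mono[OF \<open>x \<le> y\<close>, of "1 - l"]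
    by (auto simp: a_def b_def algebra_simps)
  have "y^2 * P - Q^2 = 4*b^3*x^3 + 6*a*b^2*x^3 + 6*a*b^3*x^2 + 2*a^2*b*x^3 + 11*a^2*b^2*x^2
      + 4*a^2*b^3*x + 5*a^3*b*x^2 + 8*a^3*b^2*x + a^3*b^3 + 4*a^4*b*x + 2*a^4*b^2 + a^5*b"
    unfolding P_def Q_def a_def b_def by algebra
  also have "\<dots> \<ge> 0"
    using \<open>0 < x\<close> \<open>0 \<le> a\<close> \<open>0 \<le> b\<close> by simp
  finally have QP: "Q^2 \<le> y^2 * P" by simp
  have sx: "s - x = (1 - l) * (y - x)"
    using assms(5) by (simp add: algebra_simps)
  have "s^3 - l * x^3 = (s - x) * (s^2 + s * x + x^2) + (1 - l) * x^3"
    by (simp add: algebra_simps power2_eq_square power3_eq_cube)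
  also have "\<dots> = (1 - l) * Q"
    unfolding Q_def sx by (simp add: algebra_simps)
  finally have Q: "s^3 - l * x^3 = (1 - l) * Q" .
  have "s^4 - l * x^4 = (s - x) * (s^3 + s^2 * x + s * x^2 + x^3) + (1 - l) * x^4"
    by (simp add: algebra_simps power2_eq_square power3_eq_cube power4_eq_xxxx)
  also have "\<dots> = (1 - l) * P"
    unfolding P_def sx by (simp add: algebra_simps)
  finally have P: "s^4 - l * x^4 = (1 - l) * P" .
  have "(1 - l)^2 * Q^2 \<le> (1 - l)^2 * (y^2 * P)"
    using QP by (simp add: mult_left_mono)
  then show ?thesis
    unfolding Q P by (simp add: power2_eq_square algebra_simps)
qed

lemma cube_chart_combination_weight:
  fixes x y l s \<nu> \<sigma> :: real
  assumes "0 < x" "x \<le> y" "0 < l" "l < 1"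
    and s: "s = l * x + (1 - l) * y" and \<nu>: "\<nu> = l * x^3 / s^3" and \<sigma>: "\<sigma> = (s - \<nu> * x) / (1 - \<nu>)"
  shows "0 \<le> \<nu>" "\<nu> < 1" "0 < \<sigma>" "\<sigma> \<le> y" "\<nu> * x + (1 - \<nu>) * \<sigma> = s"
    and "(1 - \<nu>) * y / \<sigma> \<le> (1 - l) * y^3 / s^3"
proof -
  have "x \<le> s"
    using assms mult_left_mono[OF \<open>x \<le> y\<close>, of "1 - l"] by (simp add: algebra_simps)
  then have "0 < s" using \<open>0 < x\<close> by simp
  have "x^3 \<le> s^3"
    using \<open>x \<le> s\<close> \<open>0 < x\<close> by (simp add: power_mono)
  then have "\<nu> \<le> l"
    using \<open>0 < l\<close> \<open>0 < s\<close> by (simp add: \<nu> divide_le_eq mult_left_le)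
  then show "\<nu> < 1"
    using \<open>l < 1\<close> by simp
  show "0 \<le> \<nu>"
    using \<open>0 < l\<close> \<open>0 < x\<close> \<open>0 < s\<close> by (simp add: \<nu>)
  have "\<nu> * x < s"
    using mult_strict_right_mono[OF \<open>\<nu> < 1\<close> \<open>0 < x\<close>] \<open>x \<le> s\<close> by simp
  then show "0 < \<sigma>"
    using \<open>\<nu> < 1\<close> by (simp add: \<sigma>)
  have "(l - \<nu>) * x \<le> (l - \<nu>) * y"
    using \<open>\<nu> \<le> l\<close> \<open>x \<le> y\<close> by (simp add: mult_left_mono)
  then show "\<sigma> \<le> y"
    using \<open>\<nu> < 1\<close> by (simp add: \<sigma> s divide_le_eq algebra_simps)
  show "\<nu> * x + (1 - \<nu>) * \<sigma> = s"
    using \<open>\<nu> < 1\<close> by (simp add: \<sigma>)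
  have cube: "(1 - \<nu>) * s^3 = s^3 - l * x^3"
    using \<open>0 < s\<close> by (simp add: \<nu> algebra_simps)
  have quartic: "(s - \<nu> * x) * s^3 = s^4 - l * x^4"
    using \<open>0 < s\<close> by (simp add: \<nu> algebra_simps power3_eq_cube power4_eq_xxxx)
  have "0 < s^4 - l * x^4"
    using \<open>\<nu> * x < s\<close> \<open>0 < s\<close> by (simp flip: quartic)
  have "(1 - \<nu>) * y / \<sigma> = y * ((1 - \<nu>) * s^3)^2 / ((s - \<nu> * x) * s^3 * s^3)"
    using \<open>\<nu> < 1\<close> \<open>0 < s\<close> by (simp add: \<sigma> power2_eq_square)
  also have "\<dots> = y * (s^3 - l * x^3)^2 / ((s^4 - l * x^4) * s^3)"
    unfolding cube quartic ..
  also have "\<dots> \<le> y * ((1 - l) * y^2 * (s^4 - l * x^4)) / ((s^4 - l * x^4) * s^3)"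
    using power_gap_inequality[OF \<open>0 < x\<close> \<open>x \<le> y\<close> _ _ s] assms(1,2,3,4) \<open>0 < s\<close> \<open>0 < s^4 - l * x^4\<close>
    by (intro divide_right_mono mult_left_mono) auto
  also have "\<dots> = (1 - l) * y^3 / s^3"
    using \<open>0 < s^4 - l * x^4\<close> by (simp add: power2_eq_square power3_eq_cube mult_ac)
  finally show "(1 - \<nu>) * y / \<sigma> \<le> (1 - l) * y^3 / s^3" .
qed

definition cube_chart :: "(real \<times> real) set \<Rightarrow> (real \<times> real) set" where
  "cube_chart D = {(s, t). 0 < s \<and> (t / s^3 - 1, s) \<in> D}"

lemma cube_chart_combination:
  assumes "convex D" "upward_closed D" "D \<subseteq> {(q, v). -1 \<le> q}"
    and "(s1, t1) \<in> cube_chart D" "(s2, t2) \<in> cube_chart D" "s1 \<le> s2" "0 < l" "l < 1"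
  shows "(l * s1 + (1 - l) * s2, l * t1 + (1 - l) * t2) \<in> cube_chart D"
proof -
  define s t where "s = l * s1 + (1 - l) * s2" and "t = l * t1 + (1 - l) * t2"
  define \<nu> \<sigma> where "\<nu> = l * s1^3 / s^3" and "\<sigma> = (s - \<nu> * s1) / (1 - \<nu>)"
  define A1 A2 where "A1 = t1 / s1^3" and "A2 = t2 / s2^3"
  have "0 < s1" "(A1 - 1, s1) \<in> D" "0 < s2" "(A2 - 1, s2) \<in> D"
    using assms(4,5) by (auto simp: cube_chart_def A1_def A2_def)
  have "0 \<le> A2"
    using assms(3) \<open>(A2 - 1, s2) \<in> D\<close> by auto
  have "0 < s"
    using \<open>0 < s1\<close> \<open>0 < s2\<close> assms(7,8) by (simp add: s_def add_pos_pos)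
  note weight = cube_chart_combination_weight[OF \<open>0 < s1\<close> \<open>s1 \<le> s2\<close> assms(7,8) s_def \<nu>_def \<sigma>_def]
  have "A2 * 1 \<le> A2 * (s2 / \<sigma>)"
    using \<open>0 \<le> A2\<close> weight(3,4) by (intro mult_left_mono) auto
  then have "(A2 * s2 / \<sigma> - 1, \<sigma>) \<in> D"
    using weight(3) by (intro upward_closedD[OF assms(2) \<open>(A2 - 1, s2) \<in> D\<close>]) auto
  from convex_real_pairD[OF assms(1) \<open>(A1 - 1, s1) \<in> D\<close> this, of \<nu>] weight(1,2,5)
  have comb: "(\<nu> * A1 + (1 - \<nu>) * (A2 * s2 / \<sigma>) - 1, s) \<in> D"
    by (simp add: algebra_simps)
  have le: "\<nu> * A1 + (1 - \<nu>) * (A2 * s2 / \<sigma>) \<le> t / s^3"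
  proof -
    have "t = l * s1^3 * A1 + (1 - l) * s2^3 * A2"
      using \<open>0 < s1\<close> \<open>0 < s2\<close> by (simp add: t_def A1_def A2_def)
    then have t_eq: "t / s^3 = \<nu> * A1 + (1 - l) * s2^3 / s^3 * A2"
      unfolding \<nu>_def by (simp only: add_divide_distrib times_divide_eq_left)
    have "(1 - \<nu>) * s2 / \<sigma> * A2 \<le> (1 - l) * s2^3 / s^3 * A2"
      using weight(6) \<open>0 \<le> A2\<close> by (rule mult_right_mono)
    then show ?thesis
      unfolding t_eq by (simp add: mult_ac)
  qed
  then have "(1 + (\<nu> * A1 + (1 - \<nu>) * (A2 * s2 / \<sigma>) - 1)) * s \<le> (1 + (t / s^3 - 1)) * s"
    using \<open>0 < s\<close> by (intro mult_right_mono) auto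
  with upward_closedD[OF assms(2) comb] le have "(t / s^3 - 1, s) \<in> D"
    by simp
  then show ?thesis
    using \<open>0 < s\<close> by (simp add: cube_chart_def s_def t_def)
qed

lemma convex_cube_chart:
  assumes "convex D" "upward_closed D" "D \<subseteq> {(q, v). -1 \<le> q}"
  shows "convex (cube_chart D)"
proof (rule convex_real_pairI)
  fix a b c d l :: real
  assume ab: "(a, b) \<in> cube_chart D" and cd: "(c, d) \<in> cube_chart D" and "0 < l" "l < 1"
  show "(l * a + (1 - l) * c, l * b + (1 - l) * d) \<in> cube_chart D"
  proof (cases "a \<le> c")
    case True
    then show ?thesis
      using cube_chart_combination[OF assms ab cd _ \<open>0 < l\<close> \<open>l < 1\<close>] by blast
  next
    case False
    then show ?thesis
      using cube_chart_combination[OF assms cd ab, of "1 - l"] False \<open>0 < l\<close> \<open>l < 1\<close>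
      by (simp add: add.commute)
  qed
qed

lemma convex_perspective_preimage:
  fixes G :: "(real \<times> real) set"
  assumes "convex G"
  shows "convex {(p, u). 0 < p \<and> (1 / p, (u + 1) / p) \<in> G}"
proof (rule convex_real_pairI)
  fix p1 u1 p2 u2 l :: real
  assume "(p1, u1) \<in> {(p, u). 0 < p \<and> (1 / p, (u + 1) / p) \<in> G}"
    and "(p2, u2) \<in> {(p, u). 0 < p \<and> (1 / p, (u + 1) / p) \<in> G}" and "0 < l" "l < 1"
  then have "0 < p1" "0 < p2" and G1: "(1 / p1, (u1 + 1) / p1) \<in> G" and G2: "(1 / p2, (u2 + 1) / p2) \<in> G"
    by auto
  define p u where "p = l * p1 + (1 - l) * p2" and "u = l * u1 + (1 - l) * u2"
  define \<mu> where "\<mu> = l * p1 / p"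
  have "0 < l * p1" "0 < (1 - l) * p2"
    using \<open>0 < p1\<close> \<open>0 < p2\<close> \<open>0 < l\<close> \<open>l < 1\<close> by simp_all
  then have "0 < p" "0 \<le> \<mu>" "\<mu> \<le> 1"
    by (simp_all add: \<mu>_def p_def)
  have "p - l * p1 = (1 - l) * p2"
    by (simp add: p_def)
  then have "1 - \<mu> = (1 - l) * p2 / p"
    using \<open>0 < p\<close> by (simp add: \<mu>_def diff_divide_eq_iff)
  then have w1: "\<mu> / p1 = l / p" and w2: "(1 - \<mu>) / p2 = (1 - l) / p"
    using \<open>0 < p1\<close> \<open>0 < p2\<close> by (simp_all add: \<mu>_def)
  have "\<mu> * (1 / p1) + (1 - \<mu>) * (1 / p2) = 1 / p"
    using w1 w2 by (simp add: diff_divide_distrib)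
  moreover have "\<mu> * ((u1 + 1) / p1) + (1 - \<mu>) * ((u2 + 1) / p2) = (u + 1) / p"
  proof -
    have "\<mu> * ((u1 + 1) / p1) + (1 - \<mu>) * ((u2 + 1) / p2)
        = (u1 + 1) * (\<mu> / p1) + (u2 + 1) * ((1 - \<mu>) / p2)"
      by (simp add: mult.commute)
    also have "\<dots> = (l * (u1 + 1) + (1 - l) * (u2 + 1)) / p"
      unfolding w1 w2 by (simp add: add_divide_distrib mult.commute)
    also have "\<dots> = (u + 1) / p"
      by (simp add: u_def algebra_simps)
    finally show ?thesis .
  qed
  ultimately have "(1 / p, (u + 1) / p) \<in> G"
    using convex_real_pairD[OF assms G1 G2 \<open>0 \<le> \<mu>\<close> \<open>\<mu> \<le> 1\<close>] by simp
  then show "(l * p1 + (1 - l) * p2, l * u1 + (1 - l) * u2) \<in> {(p, u). 0 < p \<and> (1 / p, (u + 1) / p) \<in> G}"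
    using \<open>0 < p\<close> by (simp add: p_def u_def)
qed

lemma Phi_preimage_Int_D0:
  "Phi_preimage D \<inter> D0 = {(p, u). 0 < p \<and> (1 / p, (u + 1) / p) \<in> cube_chart D} \<inter> D0"
proof -
  have "((u + 1) / p) / (1 / p)^3 = p^2 * (u + 1)" if "0 < p" for p u :: real
    using that by (simp add: power_one_over field_simps power2_eq_square power3_eq_cube)
  then show ?thesis
    by (auto simp: Phi_preimage_def Phi_def D0_def cube_chart_def)
qed

lemma convex_Phi_preimage_Int_D0:
  assumes "convex D" "upward_closed D" "D \<subseteq> {(q, v). -1 \<le> q}"
  shows "convex (Phi_preimage D \<inter> D0)"
  unfolding Phi_preimage_Int_D0
  by (intro convex_Int convex_perspective_preimage convex_cube_chart convex_D0 assms)

lemma upward_closed_Dn: "upward_closed (Dn n)"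
  by (induction n) (simp_all add: upward_closed_D0 upward_closed_Phi_preimage_Int_D0)

lemma Dn_subset_D0: "Dn n \<subseteq> D0"
  by (cases n) auto

theorem proposition2:
  fixes n :: nat
  shows "convex (Dn n)"
proof (induction n)
  case 0
  show ?case by (simp add: convex_D0)
next
  case (Suc n)
  have "Dn n \<subseteq> {(q, v). -1 \<le> q}"
    using Dn_subset_D0 by (fastforce simp: D0_def)
  with Suc.IH upward_closed_Dn show ?case
    by (simp add: convex_Phi_preimage_Int_D0)
qed

end
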